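(* Assume $L$ satisfies (L1),(L2) and $W$ satisfies (W1)–(W6) (as in the context), and let $\varrho>0$. Then there exists $\rho>\varrho$ such that $\sup_{u\in\partial Q}I(u)\le0$, where $$Q=\{\zeta e_{\bar n+1}:0\le\zeta\le\rho\}\oplus\{u\in E^-\oplus E^0:\|u\|\le\rho\}$$ and $\partial Q$ is the boundary of $Q$ relative to the finite-dimensional space $\operatorname{span}\{e_{\bar n+1}\}\oplus E^-\oplus E^0$, i.e. $\partial Q=\{u\in E^-\oplus E^0:\|u\|\le\rho\}\cup\big(\rho e_{\bar n+1}+\{u\in E^-\oplus E^0:\|u\|\le\rho\}\big)\cup\big(\{\zeta e_{\bar n+1}:0\le\zeta\le\rho\}+\{u\in E^-\oplus E^0:\|u\|=\rho\}\big)$.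
   Context: $L\in C(\mathbb{R},\mathbb{R}^{N\times N})$ symmetric-matrix valued, $W\in C^1(\mathbb{R}\times\mathbb{R}^N,\mathbb{R})$, $\nabla W$ the gradient in $x$, $\widetilde W(t,x)=2W(t,x)-(\nabla W(t,x),x)$, $l(t)=\min_{|x|=1}(L(t)x,x)$. (L1): $\exists\,\alpha>1,M>0$ with $\lim_{R\to\infty}\operatorname{meas}\{t:|t|\ge R,\ l(t)\le M|t|\ln^\alpha|t|\}=0$. (L2): $\exists L_0>0$ with $(L(t)x,x)\ge-L_0|x|^2$. $\mathcal{H}$ is the self-adjoint extension in $L^2(\mathbb{R},\mathbb{R}^N)$ of $-\frac{d^2}{dt^2}+L(t)$, with eigenvalues $\lambda_1\le\lambda_2\le\cdots\to\infty$ and eigenfunctions $e_n$ ($\mathcal{H}e_n=\lambda_ne_n$) forming an orthogonal basis of $L^2$; $\bar n$ is the number of nonpositive eigenvalues. $E=\mathfrak{D}(|\mathcal{H}|^{1/2})$, $E=E^-\oplus E^0\oplus E^+$ (spans of eigenfunctions with negative, zero, positive eigenvalues; $E^-\oplus E^0$ finite dimensional), norm $\|u\|^2=\||\mathcal{H}|^{1/2}u\|_{L^2}^2+\|u^0\|_{L^2}^2$. $I(u)=\frac12\|u^+\|^2-\frac12\|u^-\|^2-\int_{\mathbb{R}}W(t,u(t))\,dt$. (W1) $W(t,0)=0$, $|\nabla W(t,x)|\le b_1|x|$. (W2) $\widetilde W(t,x)\ge b_2|x|^\mu$ for $|x|\ge r_1$, with $b_2,r_1>0,\mu>1$. (W3)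 $\widetilde W(t,x)\ge-b_3|x|$ for $|x|<r_1$, $b_3>0$. (W4) $|W(t,x)|\le\frac{\lambda_{\bar n+1}-\sigma_0}{2}|x|^2$ for $|x|\le r_2$, $r_2,\sigma_0>0$. (W5) $W(t,x)\ge(\frac{\lambda_{\bar n+1}}2+\varepsilon_0)|x|^2$ for $|x|\ge r_\infty$, $\varepsilon_0,r_\infty>0$. (W6) $W\ge0$. All for all $t\in\mathbb{R}$. *)

theory Defs
  imports "HOL-Analysis.Analysis"
begin

text \<open>Setting: functions t \<mapsto> u(t) from the real line into R^N, R^N rendered as real^'N.
  Eigenvalues/eigenfunctions are indexed from 0, so the paper's e_{k} is our e (k-1).\<close>

definition lmin :: "(real \<Rightarrow> real^'N^'N) \<Rightarrow> real \<Rightarrow> real" where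
  "lmin L t = Inf {(L t *v x) \<bullet> x | x. norm x = 1}"

definition cond_L1 :: "(real \<Rightarrow> real^'N^'N) \<Rightarrow> bool" where
  "cond_L1 L \<longleftrightarrow> (\<exists>\<alpha>>1. \<exists>M>0.
     ((\<lambda>R. emeasure lborel {t. \<bar>t\<bar> \<ge> R \<and> lmin L t \<le> M * \<bar>t\<bar> * (ln \<bar>t\<bar>) powr \<alpha>})
        \<longlongrightarrow> 0) at_top)"

definition cond_L2 :: "(real \<Rightarrow> real^'N^'N) \<Rightarrow> bool" where
  "cond_L2 L \<longleftrightarrow> (\<exists>L0>0. \<forall>t x. (L t *v x) \<bullet> x \<ge> - L0 * (norm x)\<^sup>2)"

definition L2fun :: "(real \<Rightarrow> real^'N) \<Rightarrow> bool" where
  "L2fun u \<longleftrightarrow> u \<in> borel_measurable lborel \<and> integrable lborel (\<lambda>t. (norm (u t))\<^sup>2)"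

definition eigenfun :: "(real \<Rightarrow> real^'N^'N) \<Rightarrow> real \<Rightarrow> (real \<Rightarrow> real^'N) \<Rightarrow> bool" where
  "eigenfun L \<mu> e \<longleftrightarrow> L2fun e \<and>
     (\<exists>e' e''. \<forall>t. (e has_vector_derivative e' t) (at t) \<and>
                   (e' has_vector_derivative e'' t) (at t) \<and>
                   - e'' t + L t *v e t = \<mu> *\<^sub>R e t)"

definition coef :: "(nat \<Rightarrow> real \<Rightarrow> real^'N) \<Rightarrow> (real \<Rightarrow> real^'N) \<Rightarrow> nat \<Rightarrow> real" where
  "coef e u n = (LINT t|lborel. e n t \<bullet> u t)"

definition eigen_system ::
  "(real \<Rightarrow> real^'N^'N) \<Rightarrow> (nat \<Rightarrow> real) \<Rightarrow> (nat \<Rightarrow> real \<Rightarrow> real^'N) \<Rightarrow> bool" where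
  "eigen_system L lam e \<longleftrightarrow>
     (\<forall>n. eigenfun L (lam n) (e n)) \<and>
     (\<forall>m n. (LINT t|lborel. e m t \<bullet> e n t) = (if m = n then 1 else 0)) \<and>
     (\<forall>u. L2fun u \<longrightarrow> (\<lambda>n. (coef e u n)\<^sup>2) sums (LINT t|lborel. (norm (u t))\<^sup>2)) \<and>
     mono lam \<and> filterlim lam at_top sequentially"

definition nbar :: "(nat \<Rightarrow> real) \<Rightarrow> nat" where
  "nbar lam = card {n. lam n \<le> 0}"

definition Eminus0 :: "(nat \<Rightarrow> real) \<Rightarrow> (nat \<Rightarrow> real \<Rightarrow> real^'N) \<Rightarrow> (real \<Rightarrow> real^'N) set" where
  "Eminus0 lam e = {(\<lambda>t. \<Sum>n\<in>{n. lam n \<le> 0}. a n *\<^sub>R e n t) | a. True}"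

text \<open>\<parallel>u\<parallel>^2 = \<parallel>|H|^{1/2} u\<parallel>^2_{L^2} + \<parallel>u^0\<parallel>^2_{L^2}, expressed in eigen-coordinates.\<close>
definition Enorm :: "(nat \<Rightarrow> real) \<Rightarrow> (nat \<Rightarrow> real \<Rightarrow> real^'N) \<Rightarrow> (real \<Rightarrow> real^'N) \<Rightarrow> real" where
  "Enorm lam e u = sqrt ((\<Sum>n. \<bar>lam n\<bar> * (coef e u n)\<^sup>2)
                        + (\<Sum>n. if lam n = 0 then (coef e u n)\<^sup>2 else 0))"

definition Enorm_plus_sq :: "(nat \<Rightarrow> real) \<Rightarrow> (nat \<Rightarrow> real \<Rightarrow> real^'N) \<Rightarrow> (real \<Rightarrow> real^'N) \<Rightarrow> real" where
  "Enorm_plus_sq lam e u = (\<Sum>n. if lam n > 0 then lam n * (coef e u n)\<^sup>2 else 0)"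

definition Enorm_minus_sq :: "(nat \<Rightarrow> real) \<Rightarrow> (nat \<Rightarrow> real \<Rightarrow> real^'N) \<Rightarrow> (real \<Rightarrow> real^'N) \<Rightarrow> real" where
  "Enorm_minus_sq lam e u = (\<Sum>n. if lam n < 0 then \<bar>lam n\<bar> * (coef e u n)\<^sup>2 else 0)"

definition Ifun :: "(nat \<Rightarrow> real) \<Rightarrow> (nat \<Rightarrow> real \<Rightarrow> real^'N) \<Rightarrow> (real \<Rightarrow> real^'N \<Rightarrow> real)
                    \<Rightarrow> (real \<Rightarrow> real^'N) \<Rightarrow> real" where
  "Ifun lam e W u = 1/2 * Enorm_plus_sq lam e u - 1/2 * Enorm_minus_sq lam e u
                    - (LINT t|lborel. W t (u t))"

definition boundaryQ :: "(nat \<Rightarrow> real) \<Rightarrow> (nat \<Rightarrow> real \<Rightarrow> real^'N) \<Rightarrow> real \<Rightarrow> (real \<Rightarrow> real^'N) set" where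
  "boundaryQ lam e \<rho> =
     {v \<in> Eminus0 lam e. Enorm lam e v \<le> \<rho>}
   \<union> {(\<lambda>t. \<rho> *\<^sub>R e (nbar lam) t + v t) | v. v \<in> Eminus0 lam e \<and> Enorm lam e v \<le> \<rho>}
   \<union> {(\<lambda>t. \<zeta> *\<^sub>R e (nbar lam) t + v t) | \<zeta> v. 0 \<le> \<zeta> \<and> \<zeta> \<le> \<rho> \<and>
                                         v \<in> Eminus0 lam e \<and> Enorm lam e v = \<rho>}"

definition C1_with_grad :: "(real \<Rightarrow> real^'N \<Rightarrow> real) \<Rightarrow> (real \<Rightarrow> real^'N \<Rightarrow> real^'N) \<Rightarrow> bool" where
  "C1_with_grad W gradW \<longleftrightarrow> (\<exists>Wt.
     continuous_on UNIV (\<lambda>(t, x). Wt t x) \<and> continuous_on UNIV (\<lambda>(t, x). gradW t x) \<and>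
     (\<forall>t x. ((\<lambda>(s, y). W s y) has_derivative (\<lambda>(s, h). s * Wt t x + gradW t x \<bullet> h)) (at (t, x))))"

definition Wtilde :: "(real \<Rightarrow> real^'N \<Rightarrow> real) \<Rightarrow> (real \<Rightarrow> real^'N \<Rightarrow> real^'N) \<Rightarrow> real \<Rightarrow> real^'N \<Rightarrow> real" where
  "Wtilde W gradW t x = 2 * W t x - gradW t x \<bullet> x"

end

(* Write k = nbar lam, so that e k is the paper's e_{nbar+1} and Q lies in span{e 0, ..., e k}.
   For u = \<Sum>j\<le>k. b j e j the quadratic part of I is at most lam k / 2 * b k^2 \<le> lam k / 2 * |b|^2,
   while (W5) gives \<integral>W(u) \<ge> (lam k / 2 + \<epsilon>) |b|^2 up to two errors: where |t| \<le> T and |u| < R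
   the loss is at most 2 T R^2 (lam k / 2 + \<epsilon>), and where |t| > T it is at most a small multiple
   of |b|^2 since the finitely many e j have small L^2 tails. Hence I(u) \<le> A - \<epsilon>/2 |b|^2 on that
   span. A point of the boundary of Q either has no e k component, and then I(u) \<le> 0 because W \<ge> 0
   and all other eigenvalues are nonpositive, or has |b|^2 \<ge> \<rho>^2 / (1 + \<Sum>n<k. |lam n|), which
   forces I(u) \<le> 0 once \<rho> is large. *)

theory Submission
  imports Defs
begin

definition orthonormal_L2 :: "(nat \<Rightarrow> real \<Rightarrow> real^'N) \<Rightarrow> bool" where
  "orthonormal_L2 e \<longleftrightarrow> (\<forall>n. L2fun (e n)) \<and>
     (\<forall>m n. (LINT t|lborel. e m t \<bullet> e n t) = (if m = n then 1 else 0))"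

definition lincomb :: "(nat \<Rightarrow> 'a \<Rightarrow> 'b::real_vector) \<Rightarrow> nat set \<Rightarrow> (nat \<Rightarrow> real) \<Rightarrow> 'a \<Rightarrow> 'b" where
  "lincomb e S b = (\<lambda>t. \<Sum>j\<in>S. b j *\<^sub>R e j t)"

definition tail_L2 :: "(real \<Rightarrow> real^'N) \<Rightarrow> real \<Rightarrow> real" where
  "tail_L2 f T = (LINT t|lborel. indicator {t. T < \<bar>t\<bar>} t * (norm (f t))\<^sup>2)"

lemma integrable_inner_L2fun:
  fixes f g :: "real \<Rightarrow> real^'N"
  assumes "L2fun f" "L2fun g"
  shows "integrable lborel (\<lambda>t. f t \<bullet> g t)"
proof (rule Bochner_Integration.integrable_bound[where f="\<lambda>t. (norm (f t))\<^sup>2 + (norm (g t))\<^sup>2"])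
  show "integrable lborel (\<lambda>t. (norm (f t))\<^sup>2 + (norm (g t))\<^sup>2)"
    using assms by (simp add: L2fun_def)
  show "(\<lambda>t. f t \<bullet> g t) \<in> borel_measurable lborel"
    using assms unfolding L2fun_def by (metis borel_measurable_inner)
  have "\<bar>f t \<bullet> g t\<bar> \<le> (norm (f t))\<^sup>2 + (norm (g t))\<^sup>2" for t
    using Cauchy_Schwarz_ineq2[of "f t" "g t"] sum_squares_bound[of "norm (f t)" "norm (g t)"]
      mult_nonneg_nonneg[OF norm_ge_zero norm_ge_zero, of "f t" "g t"]
    by linarith
  then show "AE t in lborel. norm (f t \<bullet> g t) \<le> norm ((norm (f t))\<^sup>2 + (norm (g t))\<^sup>2)"
    by simp
qed

lemma integrable_inner_orthonormal_L2:
  assumes "orthonormal_L2 e"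
  shows "integrable lborel (\<lambda>t. e m t \<bullet> e n t)"
  using assms integrable_inner_L2fun by (auto simp: orthonormal_L2_def)

lemma coef_lincomb:
  assumes e: "orthonormal_L2 e" and S: "finite S"
  shows "coef e (lincomb e S b) n = (if n \<in> S then b n else 0)"
proof -
  have "coef e (lincomb e S b) n = (LINT t|lborel. (\<Sum>j\<in>S. b j * (e n t \<bullet> e j t)))"
    unfolding coef_def lincomb_def by (simp add: inner_sum_right)
  also have "\<dots> = (\<Sum>j\<in>S. b j * (if n = j then 1 else 0))"
    using e integrable_inner_orthonormal_L2[OF e]
    by (simp add: Bochner_Integration.integral_sum orthonormal_L2_def)
  also have "\<dots> = (if n \<in> S then b n else 0)"
    using S by (simp add: if_distrib cong: if_cong)
  finally show ?thesis .
qed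

lemma
  assumes e: "orthonormal_L2 e" and S: "finite S"
  shows integrable_norm_lincomb_sq: "integrable lborel (\<lambda>t. (norm (lincomb e S b t))\<^sup>2)"
    and integral_norm_lincomb_sq: "(LINT t|lborel. (norm (lincomb e S b t))\<^sup>2) = (\<Sum>j\<in>S. (b j)\<^sup>2)"
proof -
  have expand: "(norm (lincomb e S b t))\<^sup>2 = (\<Sum>i\<in>S. \<Sum>j\<in>S. b i * (b j * (e j t \<bullet> e i t)))" for t
    by (simp add: lincomb_def power2_norm_eq_inner inner_sum_left inner_sum_right
        sum_distrib_left mult.assoc)
  have int: "integrable lborel (\<lambda>t. b i * (b j * (e j t \<bullet> e i t)))" for i j
    using integrable_inner_orthonormal_L2[OF e] by simp
  then show "integrable lborel (\<lambda>t. (norm (lincomb e S b t))\<^sup>2)"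
    unfolding expand by auto
  have "(LINT t|lborel. (norm (lincomb e S b t))\<^sup>2)
      = (\<Sum>i\<in>S. \<Sum>j\<in>S. b i * (b j * (if j = i then 1 else 0)))"
    unfolding expand using int e by (simp add: Bochner_Integration.integral_sum orthonormal_L2_def)
  also have "\<dots> = (\<Sum>j\<in>S. (b j)\<^sup>2)"
    using S by (simp add: if_distrib power2_eq_square cong: if_cong)
  finally show "(LINT t|lborel. (norm (lincomb e S b t))\<^sup>2) = (\<Sum>j\<in>S. (b j)\<^sup>2)" .
qed

lemma L2fun_lincomb:
  assumes "orthonormal_L2 e" "finite S"
  shows "L2fun (lincomb e S b)"
proof -
  have "e j \<in> borel_measurable lborel" for j
    using assms(1) by (simp add: orthonormal_L2_def L2fun_def)
  then have "lincomb e S b \<in> borel_measurable lborel"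
    unfolding lincomb_def by measurable
  then show ?thesis
    using integrable_norm_lincomb_sq[OF assms] by (simp add: L2fun_def)
qed

lemma tail_L2_tendsto_zero:
  assumes "L2fun f"
  shows "(\<lambda>i::nat. tail_L2 f (real i)) \<longlonglongrightarrow> 0"
proof -
  have f: "f \<in> borel_measurable lborel" and int: "integrable lborel (\<lambda>t. (norm (f t))\<^sup>2)"
    using assms by (auto simp: L2fun_def)
  have meas: "(\<lambda>t. indicator {t. real i < \<bar>t\<bar>} t * (norm (f t))\<^sup>2) \<in> borel_measurable lborel"
    for i :: nat
    using f by measurable
  have lim: "AE t in lborel.
      (\<lambda>i::nat. indicator {t. real i < \<bar>t\<bar>} t * (norm (f t))\<^sup>2) \<longlonglongrightarrow> (0::real)"
  proof (intro AE_I2 tendsto_eventually)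
    fix t :: real
    obtain N :: nat where "\<bar>t\<bar> \<le> real N" using real_arch_simple by blast
    then show "\<forall>\<^sub>F i in sequentially. indicator {t. real i < \<bar>t\<bar>} t * (norm (f t))\<^sup>2 = (0::real)"
      unfolding eventually_sequentially by (intro exI[of _ N]) (auto simp: indicator_def)
  qed
  have bound: "AE t in lborel. norm (indicator {t. real i < \<bar>t\<bar>} t * (norm (f t))\<^sup>2) \<le> (norm (f t))\<^sup>2"
    for i :: nat
    by (intro AE_I2) (auto simp: indicator_def)
  show ?thesis
    using integral_dominated_convergence[OF borel_measurable_const meas int lim bound]
    by (simp add: tail_L2_def)
qed

lemma tail_L2_sum_small:
  assumes "\<forall>j\<in>S. L2fun (e j)" and "\<delta> > 0"
  obtains T where "T \<ge> 0" "(\<Sum>j\<in>S. tail_L2 (e j) T) < \<delta>"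
proof -
  have "(\<lambda>i::nat. \<Sum>j\<in>S. tail_L2 (e j) (real i)) \<longlonglongrightarrow> (\<Sum>j\<in>S. 0)"
    using assms(1) by (intro tendsto_sum tail_L2_tendsto_zero) auto
  then have "\<forall>\<^sub>F i in sequentially. (\<Sum>j\<in>S. tail_L2 (e j) (real i)) < \<delta>"
    using assms(2) by (simp add: order_tendstoD(2))
  then obtain i :: nat where "(\<Sum>j\<in>S. tail_L2 (e j) (real i)) < \<delta>"
    by (auto simp: eventually_sequentially)
  then show ?thesis using that[of "real i"] by simp
qed

lemma norm_sum_scaleR_sq_le:
  fixes x :: "'i \<Rightarrow> 'a::real_normed_vector"
  shows "(norm (\<Sum>j\<in>S. b j *\<^sub>R x j))\<^sup>2 \<le> (\<Sum>j\<in>S. (b j)\<^sup>2) * (\<Sum>j\<in>S. (norm (x j))\<^sup>2)"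
proof -
  have "norm (\<Sum>j\<in>S. b j *\<^sub>R x j) \<le> (\<Sum>j\<in>S. \<bar>b j\<bar> * norm (x j))"
    by (rule order_trans[OF norm_sum]) simp
  then have "(norm (\<Sum>j\<in>S. b j *\<^sub>R x j))\<^sup>2 \<le> (\<Sum>j\<in>S. \<bar>b j\<bar> * norm (x j))\<^sup>2"
    by (intro power_mono) auto
  also have "\<dots> \<le> (\<Sum>j\<in>S. \<bar>b j\<bar>\<^sup>2) * (\<Sum>j\<in>S. (norm (x j))\<^sup>2)"
    by (rule Cauchy_Schwarz_ineq_sum)
  finally show ?thesis by simp
qed

lemma C1_with_grad_partial_derivative:
  fixes W :: "real \<Rightarrow> real^'N \<Rightarrow> real"
  assumes "C1_with_grad W gradW"
  shows "(W t has_derivative (\<lambda>h. gradW t y \<bullet> h)) (at y)"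
proof -
  from assms obtain Wt where
    d: "((\<lambda>(s, y). W s y) has_derivative (\<lambda>(s, h). s * Wt t y + gradW t y \<bullet> h)) (at (t, y))"
    unfolding C1_with_grad_def by blast
  have "((\<lambda>y. (t, y)) has_derivative (\<lambda>h. (0, h))) (at y)"
    by (auto intro!: derivative_eq_intros)
  from diff_chain_at[OF this d] show ?thesis
    by (simp add: o_def)
qed

lemma C1_with_grad_continuous:
  assumes "C1_with_grad W gradW"
  shows "continuous_on UNIV (case_prod W)"
proof -
  from assms obtain Wt where
    d: "\<forall>t x. ((\<lambda>(s, y). W s y) has_derivative (\<lambda>(s, h). s * Wt t x + gradW t x \<bullet> h)) (at (t, x))"
    unfolding C1_with_grad_def by blast
  have "isCont (case_prod W) p" for p
    using d has_derivative_continuous[of "case_prod W"] by (cases p) (metis case_prod_eta)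
  then show ?thesis by (simp add: continuous_at_imp_continuous_on)
qed

lemma borel_measurable_C1_with_grad_comp:
  fixes W :: "real \<Rightarrow> real^'N \<Rightarrow> real"
  assumes "C1_with_grad W gradW" "u \<in> borel_measurable lborel"
  shows "(\<lambda>t. W t (u t)) \<in> borel_measurable lborel"
proof -
  have pair: "(\<lambda>t. (t, u t)) \<in> borel_measurable lborel"
    using assms(2) by measurable
  have W: "case_prod W \<in> borel_measurable borel"
    by (rule borel_measurable_continuous_onI[OF C1_with_grad_continuous[OF assms(1)]])
  show ?thesis
    using measurable_compose[OF pair W] by simp
qed

lemma C1_with_grad_quadratic_bound:
  fixes W :: "real \<Rightarrow> real^'N \<Rightarrow> real"
  assumes C1: "C1_with_grad W gradW" and W0: "W t 0 = 0"
    and grad: "\<And>y. norm (gradW t y) \<le> b1 * norm y"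
  shows "\<bar>W t x\<bar> \<le> \<bar>b1\<bar> * (norm x)\<^sup>2"
proof -
  let ?S = "cball (0::real^'N) (norm x)"
  have "norm (W t x - W t 0) \<le> (\<bar>b1\<bar> * norm x) * norm (x - 0)"
  proof (rule differentiable_bound[where S="?S" and f'="\<lambda>y h. gradW t y \<bullet> h"])
    show "(W t has_derivative (\<lambda>h. gradW t y \<bullet> h)) (at y within ?S)" for y
      using C1_with_grad_partial_derivative[OF C1] has_derivative_at_withinI by blast
    show "onorm (\<lambda>h. gradW t y \<bullet> h) \<le> \<bar>b1\<bar> * norm x" if "y \<in> ?S" for y
    proof (rule onorm_le)
      fix h :: "real^'N"
      have "norm (gradW t y) \<le> \<bar>b1\<bar> * norm x"
      proof -
        have "norm (gradW t y) \<le> \<bar>b1\<bar> * norm y"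
          using grad[of y] abs_ge_self[of b1] by (metis mult_right_mono norm_ge_zero order_trans)
        also have "\<dots> \<le> \<bar>b1\<bar> * norm x"
          using that by (simp add: mult_left_mono)
        finally show ?thesis .
      qed
      then have "norm (gradW t y) * norm h \<le> \<bar>b1\<bar> * norm x * norm h"
        by (simp add: mult_right_mono)
      then show "norm (gradW t y \<bullet> h) \<le> \<bar>b1\<bar> * norm x * norm h"
        using Cauchy_Schwarz_ineq2[of "gradW t y" h] by simp
    qed
  qed simp_all
  then show ?thesis using W0 by (simp add: power2_eq_square mult.assoc)
qed

lemma integrable_C1_with_grad_comp_L2fun:
  assumes C1: "C1_with_grad W gradW" and W0: "\<forall>t. W t 0 = 0"
    and grad: "\<forall>t x. norm (gradW t x) \<le> b1 * norm x" and u: "L2fun u"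
  shows "integrable lborel (\<lambda>t. W t (u t))"
proof (rule Bochner_Integration.integrable_bound[where f="\<lambda>t. \<bar>b1\<bar> * (norm (u t))\<^sup>2"])
  show "integrable lborel (\<lambda>t. \<bar>b1\<bar> * (norm (u t))\<^sup>2)"
    using u by (simp add: L2fun_def)
  show "(\<lambda>t. W t (u t)) \<in> borel_measurable lborel"
    using borel_measurable_C1_with_grad_comp[OF C1] u by (simp add: L2fun_def)
  show "AE t in lborel. norm (W t (u t)) \<le> norm (\<bar>b1\<bar> * (norm (u t))\<^sup>2)"
    using C1_with_grad_quadratic_bound[OF C1] W0 grad by (intro AE_I2) simp
qed

text \<open>Applied with \<open>x = u t\<close> and \<open>E = \<Sum>j |e j t|\<^sup>2\<close>, so that \<open>cs\<close> is Cauchy-Schwarz.\<close>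
lemma superquadratic_pointwise_lower_bound:
  fixes W :: "real \<Rightarrow> 'a::real_normed_vector \<Rightarrow> real"
  assumes nonneg: "\<forall>t x. W t x \<ge> 0"
    and quadratic: "\<forall>t x. norm x \<ge> R \<longrightarrow> W t x \<ge> K * (norm x)\<^sup>2"
    and K: "K \<ge> 0" and cs: "(norm x)\<^sup>2 \<le> s * E" and "0 \<le> s" "0 \<le> E"
  shows "K * (norm x)\<^sup>2 - K * R\<^sup>2 * indicator {-T..T} t
           - K * s * (indicator {t. T < \<bar>t\<bar>} t * E) \<le> W t x"
proof -
  have pen: "0 \<le> K * R\<^sup>2 * indicator {-T..T} t" "0 \<le> K * s * (indicator {t. T < \<bar>t\<bar>} t * E)"
    and W0: "0 \<le> W t x"
    using K \<open>0 \<le> s\<close> \<open>0 \<le> E\<close> nonneg by auto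
  consider "norm x \<ge> R" | "T < \<bar>t\<bar>" | "norm x < R" "t \<in> {-T..T}"
    by fastforce
  then show ?thesis
  proof cases
    case 1
    then have "K * (norm x)\<^sup>2 \<le> W t x"
      using quadratic by blast
    then show ?thesis using pen by linarith
  next
    case 2
    have "K * (norm x)\<^sup>2 \<le> K * (s * E)"
      using cs K by (rule mult_left_mono)
    then show ?thesis using 2 pen W0 by simp
  next
    case 3
    then have "(norm x)\<^sup>2 \<le> R\<^sup>2"
      by (intro power_mono) auto
    then have "K * (norm x)\<^sup>2 \<le> K * R\<^sup>2"
      using K by (rule mult_left_mono)
    then show ?thesis using 3 pen W0 by simp
  qed
qed

lemma integral_lincomb_lower_bound:
  fixes W :: "real \<Rightarrow> real^'N \<Rightarrow> real"
  assumes e: "orthonormal_L2 e" and S: "finite S"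
    and int: "integrable lborel (\<lambda>t. W t (lincomb e S b t))"
    and nonneg: "\<forall>t x. W t x \<ge> 0"
    and quadratic: "\<forall>t x. norm x \<ge> R \<longrightarrow> W t x \<ge> K * (norm x)\<^sup>2"
    and K: "K \<ge> 0" and T: "T \<ge> 0"
  defines "s \<equiv> \<Sum>j\<in>S. (b j)\<^sup>2"
  shows "(LINT t|lborel. W t (lincomb e S b t)) \<ge>
           K * s - K * R\<^sup>2 * (2 * T) - K * s * (\<Sum>j\<in>S. tail_L2 (e j) T)"
proof -
  define u where "u = lincomb e S b"
  define A where "A = {t::real. T < \<bar>t\<bar>}"
  have ie: "integrable lborel (\<lambda>t. (norm (e j t))\<^sup>2)" for j
    using e by (simp add: orthonormal_L2_def L2fun_def)
  have iA: "integrable lborel (\<lambda>t. indicator A t * (norm (e j t))\<^sup>2)" for j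
    using integrable_mult_indicator[OF _ ie, of A j] unfolding A_def by simp
  have iI: "integrable lborel (indicator {-T..T} :: real \<Rightarrow> real)"
    using T by (intro integrable_real_indicator) auto
  define g where "g = (\<lambda>t. K * (norm (u t))\<^sup>2 - K * R\<^sup>2 * indicator {-T..T} t
                        - K * s * (\<Sum>j\<in>S. indicator A t * (norm (e j t))\<^sup>2))"
  have "integrable lborel g"
    unfolding g_def u_def using integrable_norm_lincomb_sq[OF e S] iI iA by auto
  moreover have "g t \<le> W t (u t)" for t
  proof -
    have "(norm (u t))\<^sup>2 \<le> s * (\<Sum>j\<in>S. (norm (e j t))\<^sup>2)"
      unfolding u_def s_def lincomb_def by (rule norm_sum_scaleR_sq_le)
    from superquadratic_pointwise_lower_bound[OF nonneg quadratic K this]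
    show ?thesis
      unfolding g_def A_def s_def by (simp add: sum_nonneg sum_distrib_left)
  qed
  ultimately have "(LINT t|lborel. g t) \<le> (LINT t|lborel. W t (u t))"
    using int unfolding u_def by (intro integral_mono) auto
  moreover have "(LINT t|lborel. g t) = K * s - K * R\<^sup>2 * (2 * T) - K * s * (\<Sum>j\<in>S. tail_L2 (e j) T)"
    unfolding g_def u_def tail_L2_def A_def
    using integrable_norm_lincomb_sq[OF e S] integral_norm_lincomb_sq[OF e S] iI iA T
    by (simp add: s_def A_def Bochner_Integration.integral_sum Bochner_Integration.integral_diff)
  ultimately show ?thesis unfolding u_def by linarith
qed

lemma nonpos_eigenvalues_eq_lessThan_nbar:
  fixes lam :: "nat \<Rightarrow> real"
  assumes mono: "mono lam" and lim: "filterlim lam at_top sequentially"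
  shows "{n. lam n \<le> 0} = {..<nbar lam}"
proof -
  from lim have "\<forall>\<^sub>F n in sequentially. 1 \<le> lam n"
    by (simp add: filterlim_at_top)
  then obtain N where "1 \<le> lam N"
    by (auto simp: eventually_sequentially)
  then have "0 < lam N" by simp
  define m where "m = (LEAST n. 0 < lam n)"
  have pos: "0 < lam m"
    unfolding m_def by (rule LeastI) fact
  have "{n. lam n \<le> 0} = {..<m}"
  proof (intro set_eqI iffI)
    fix n assume "n \<in> {n. lam n \<le> 0}"
    then show "n \<in> {..<m}" using pos monoD[OF mono, of m n] by force
  next
    fix n assume "n \<in> {..<m}"
    then show "n \<in> {n. lam n \<le> 0}" unfolding m_def using not_less_Least by force
  qed
  then show ?thesis by (simp add: nbar_def)
qed

lemma Enorm_plus_sq_lincomb_atMost: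
  assumes e: "orthonormal_L2 e" and nonpos: "{n. lam n \<le> 0} = {..<k}"
  shows "Enorm_plus_sq lam e (lincomb e {..k} b) = lam k * (b k)\<^sup>2"
proof -
  have neg: "lam n \<le> 0" if "n < k" for n
    using nonpos that unfolding set_eq_iff by simp
  have pos: "lam n > 0" if "k \<le> n" for n
    using nonpos that unfolding set_eq_iff by (metis lessThan_iff mem_Collect_eq not_le)
  have cf: "coef e (lincomb e {..k} b) n = (if n \<le> k then b n else 0)" for n
    using coef_lincomb[OF e, of "{..k}" b n] by simp
  have "Enorm_plus_sq lam e (lincomb e {..k} b)
      = (\<Sum>n\<in>{k}. if lam n > 0 then lam n * (coef e (lincomb e {..k} b) n)\<^sup>2 else 0)"
    unfolding Enorm_plus_sq_def
  proof (rule suminf_finite)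
    fix n assume "n \<notin> {k}"
    then consider "n < k" | "k < n" by fastforce
    then show "(if lam n > 0 then lam n * (coef e (lincomb e {..k} b) n)\<^sup>2 else 0) = 0"
      by cases (use neg[of n] pos[of n] in \<open>simp_all add: cf\<close>)
  qed simp
  then show ?thesis
    using pos[of k] by (simp add: cf)
qed

(* Finiteness of S matters: suminf of a non-summable series is unspecified, not +\<infinity>. *)
lemma Enorm_minus_sq_lincomb_nonneg:
  assumes e: "orthonormal_L2 e" and S: "finite S"
  shows "0 \<le> Enorm_minus_sq lam e (lincomb e S b)"
proof -
  have "Enorm_minus_sq lam e (lincomb e S b)
      = (\<Sum>n\<in>S. if lam n < 0 then \<bar>lam n\<bar> * (coef e (lincomb e S b) n)\<^sup>2 else 0)"
    unfolding Enorm_minus_sq_def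
    by (rule suminf_finite) (use S coef_lincomb[OF e S] in auto)
  also have "\<dots> \<ge> 0"
    by (intro sum_nonneg) (auto intro!: mult_nonpos_nonneg)
  finally show ?thesis .
qed

lemma Enorm_lincomb_sq_le:
  assumes e: "orthonormal_L2 e" and S: "finite S"
  shows "(Enorm lam e (lincomb e S a))\<^sup>2 \<le> (1 + (\<Sum>n\<in>S. \<bar>lam n\<bar>)) * (\<Sum>n\<in>S. (a n)\<^sup>2)"
proof -
  have cf: "coef e (lincomb e S a) n = (if n \<in> S then a n else 0)" for n
    by (rule coef_lincomb[OF e S])
  have "(\<Sum>n. \<bar>lam n\<bar> * (coef e (lincomb e S a) n)\<^sup>2) = (\<Sum>n\<in>S. \<bar>lam n\<bar> * (a n)\<^sup>2)"
    by (subst suminf_finite[OF S]) (auto simp: cf)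
  moreover have "(\<Sum>n. if lam n = 0 then (coef e (lincomb e S a) n)\<^sup>2 else 0)
      = (\<Sum>n\<in>S. if lam n = 0 then (a n)\<^sup>2 else 0)"
    by (subst suminf_finite[OF S]) (auto simp: cf intro!: sum.cong)
  moreover have "\<bar>lam n\<bar> * (a n)\<^sup>2 + (if lam n = 0 then (a n)\<^sup>2 else 0)
      \<le> (1 + (\<Sum>n\<in>S. \<bar>lam n\<bar>)) * (a n)\<^sup>2" if "n \<in> S" for n
  proof -
    have "\<bar>lam n\<bar> \<le> (\<Sum>n\<in>S. \<bar>lam n\<bar>)"
      using S that by (intro member_le_sum) auto
    then have "(\<bar>lam n\<bar> + 1) * (a n)\<^sup>2 \<le> (1 + (\<Sum>n\<in>S. \<bar>lam n\<bar>)) * (a n)\<^sup>2"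
      by (intro mult_right_mono) auto
    moreover have "(\<bar>lam n\<bar> + 1) * (a n)\<^sup>2 = \<bar>lam n\<bar> * (a n)\<^sup>2 + (a n)\<^sup>2"
      by (simp add: distrib_right)
    moreover have "(if lam n = 0 then (a n)\<^sup>2 else 0) \<le> (a n)\<^sup>2"
      by simp
    ultimately show ?thesis by linarith
  qed
  then have "(\<Sum>n\<in>S. \<bar>lam n\<bar> * (a n)\<^sup>2) + (\<Sum>n\<in>S. if lam n = 0 then (a n)\<^sup>2 else 0)
      \<le> (1 + (\<Sum>n\<in>S. \<bar>lam n\<bar>)) * (\<Sum>n\<in>S. (a n)\<^sup>2)"
    unfolding sum.distrib[symmetric] sum_distrib_left by (rule sum_mono)
  moreover have "0 \<le> (\<Sum>n\<in>S. \<bar>lam n\<bar> * (a n)\<^sup>2) + (\<Sum>n\<in>S. if lam n = 0 then (a n)\<^sup>2 else 0)"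
    by (intro add_nonneg_nonneg sum_nonneg) auto
  ultimately show ?thesis
    unfolding Enorm_def by simp
qed

lemma Ifun_lincomb_atMost_le:
  assumes e: "orthonormal_L2 e" and nonpos: "{n. lam n \<le> 0} = {..<k}"
  shows "Ifun lam e W (lincomb e {..k} b) \<le> lam k / 2 * (b k)\<^sup>2 - (LINT t|lborel. W t (lincomb e {..k} b t))"
  using Enorm_plus_sq_lincomb_atMost[OF e nonpos, of b] Enorm_minus_sq_lincomb_nonneg[OF e finite_atMost, of lam k b]
  unfolding Ifun_def by linarith

lemma Ifun_lincomb_atMost_nonpos:
  assumes e: "orthonormal_L2 e" and nonpos: "{n. lam n \<le> 0} = {..<k}"
    and W: "\<forall>t x. W t x \<ge> 0" and "b k = 0"
  shows "Ifun lam e W (lincomb e {..k} b) \<le> 0"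
proof -
  have "0 \<le> (LINT t|lborel. W t (lincomb e {..k} b t))"
    using W by (intro integral_nonneg_AE AE_I2) auto
  then show ?thesis
    using Ifun_lincomb_atMost_le[OF e nonpos, of W b] \<open>b k = 0\<close> by simp
qed

lemma Ifun_lincomb_atMost_anticoercive:
  fixes W :: "real \<Rightarrow> real^'N \<Rightarrow> real"
  assumes e: "orthonormal_L2 e" and nonpos: "{n. lam n \<le> 0} = {..<k}"
    and C1: "C1_with_grad W gradW" and W0: "\<forall>t. W t 0 = 0"
    and grad: "\<forall>t x. norm (gradW t x) \<le> b1 * norm x"
    and nonneg: "\<forall>t x. W t x \<ge> 0"
    and eps: "\<epsilon> > 0"
    and superquadratic: "\<forall>t x. norm x \<ge> R \<longrightarrow> W t x \<ge> (lam k / 2 + \<epsilon>) * (norm x)\<^sup>2"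
  obtains A where "A \<ge> 0"
    "\<And>b. Ifun lam e W (lincomb e {..k} b) \<le> A - \<epsilon> / 2 * (\<Sum>j\<le>k. (b j)\<^sup>2)"
proof -
  define K where "K = lam k / 2 + \<epsilon>"
  have "lam k > 0"
    using nonpos unfolding set_eq_iff by (metis lessThan_iff less_irrefl mem_Collect_eq not_le)
  then have K: "K > 0"
    using eps by (simp add: K_def)
  obtain T where T: "T \<ge> 0" and tail: "(\<Sum>j\<le>k. tail_L2 (e j) T) < \<epsilon> / (2 * K)"
    using tail_L2_sum_small[of "{..k}" e "\<epsilon> / (2 * K)"] e eps K
    by (auto simp: orthonormal_L2_def)
  have K_tail: "K * (\<Sum>j\<le>k. tail_L2 (e j) T) \<le> \<epsilon> / 2"
    using mult_strict_left_mono[OF tail K] K by simp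
  show ?thesis
  proof (rule that)
    show "0 \<le> K * R\<^sup>2 * (2 * T)"
      using K T by simp
    fix b :: "nat \<Rightarrow> real"
    define s where "s = (\<Sum>j\<le>k. (b j)\<^sup>2)"
    have s: "(b k)\<^sup>2 \<le> s" "0 \<le> s"
      unfolding s_def by (auto intro: member_le_sum sum_nonneg)
    have "integrable lborel (\<lambda>t. W t (lincomb e {..k} b t))"
      using integrable_C1_with_grad_comp_L2fun[OF C1 W0 grad L2fun_lincomb[OF e finite_atMost]] .
    from integral_lincomb_lower_bound[OF e finite_atMost this nonneg superquadratic[folded K_def]]
    have lower: "(LINT t|lborel. W t (lincomb e {..k} b t))
        \<ge> K * s - K * R\<^sup>2 * (2 * T) - K * s * (\<Sum>j\<le>k. tail_L2 (e j) T)"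
      using K T by (simp add: s_def)
    have "K * s * (\<Sum>j\<le>k. tail_L2 (e j) T) \<le> \<epsilon> / 2 * s"
      using mult_right_mono[OF K_tail s(2)] by (simp add: algebra_simps)
    moreover have "lam k / 2 * (b k)\<^sup>2 \<le> lam k / 2 * s"
      using s(1) \<open>lam k > 0\<close> by simp
    moreover have "K * s = lam k / 2 * s + \<epsilon> * s"
      by (simp add: K_def algebra_simps)
    ultimately show "Ifun lam e W (lincomb e {..k} b) \<le> K * R\<^sup>2 * (2 * T) - \<epsilon> / 2 * s"
      using Ifun_lincomb_atMost_le[OF e nonpos, of W b] lower by linarith
  qed
qed

lemma sum_atMost_fun_upd_top:
  fixes k :: nat
  shows "(\<Sum>j\<le>k. f j ((a(k := z)) j)) = f k z + (\<Sum>j<k. f j (a j))"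
proof -
  have "{..k} = insert k {..<k}" by auto
  then show ?thesis
    by (auto intro!: sum.cong)
qed

lemma lincomb_atMost_fun_upd_top:
  "(\<lambda>t. z *\<^sub>R e k t + lincomb e {..<k} a t) = lincomb e {..k} (a(k := z))"
  unfolding lincomb_def sum_atMost_fun_upd_top[of "\<lambda>j c. c *\<^sub>R e j _"] ..

lemma Eminus0_eq_range_lincomb:
  assumes "{n. lam n \<le> 0} = {..<k}"
  shows "Eminus0 lam e = range (lincomb e {..<k})"
  unfolding Eminus0_def assms lincomb_def by auto

lemma boundaryQ_lincomb_atMost:
  assumes e: "orthonormal_L2 e" and nonpos: "{n. lam n \<le> 0} = {..<k}"
    and u: "u \<in> boundaryQ lam e \<rho>"
  obtains b where "u = lincomb e {..k} b"
    "b k = 0 \<or> \<rho>\<^sup>2 \<le> (1 + (\<Sum>n<k. \<bar>lam n\<bar>)) * (\<Sum>j\<le>k. (b j)\<^sup>2)"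
proof -
  define C where "C = 1 + (\<Sum>n<k. \<bar>lam n\<bar>)"
  have C: "1 \<le> C"
    unfolding C_def by (simp add: sum_nonneg)
  have "nbar lam = k"
    using nonpos by (simp add: nbar_def)
  then consider (bottom) a where "u = lincomb e {..<k} a"
    | (top) a where "u = (\<lambda>t. \<rho> *\<^sub>R e k t + lincomb e {..<k} a t)"
    | (side) a z where "u = (\<lambda>t. z *\<^sub>R e k t + lincomb e {..<k} a t)"
        "Enorm lam e (lincomb e {..<k} a) = \<rho>"
    using u unfolding boundaryQ_def Eminus0_eq_range_lincomb[OF nonpos] by auto
  then show ?thesis
  proof cases
    case (bottom a)
    then show ?thesis
      using that[of "a(k := 0)"] lincomb_atMost_fun_upd_top[of 0 e k a] by simp
  next
    case (top a)
    have "\<rho>\<^sup>2 \<le> \<rho>\<^sup>2 + (\<Sum>j<k. (a j)\<^sup>2)"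
      by (simp add: sum_nonneg)
    also have "\<dots> \<le> C * (\<rho>\<^sup>2 + (\<Sum>j<k. (a j)\<^sup>2))"
      using mult_right_mono[OF C, of "\<rho>\<^sup>2 + (\<Sum>j<k. (a j)\<^sup>2)"] by (simp add: sum_nonneg)
    finally have "\<rho>\<^sup>2 \<le> C * (\<Sum>j\<le>k. ((a(k := \<rho>)) j)\<^sup>2)"
      unfolding sum_atMost_fun_upd_top[of "\<lambda>_ c. c\<^sup>2"] .
    then show ?thesis
      using that[of "a(k := \<rho>)"] top lincomb_atMost_fun_upd_top[of \<rho> e k a]
      unfolding C_def by blast
  next
    case (side a z)
    have "\<rho>\<^sup>2 \<le> C * (\<Sum>j<k. (a j)\<^sup>2)"
      using Enorm_lincomb_sq_le[OF e finite_lessThan, of lam k a] side(2) by (simp add: C_def)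
    also have "\<dots> \<le> C * (z\<^sup>2 + (\<Sum>j<k. (a j)\<^sup>2))"
      using C by simp
    finally have "\<rho>\<^sup>2 \<le> C * (\<Sum>j\<le>k. ((a(k := z)) j)\<^sup>2)"
      unfolding sum_atMost_fun_upd_top[of "\<lambda>_ c. c\<^sup>2"] .
    then show ?thesis
      using that[of "a(k := z)"] side lincomb_atMost_fun_upd_top[of z e k a]
      unfolding C_def by blast
  qed
qed

lemma Ifun_nonpos_on_large_boundaryQ:
  assumes e: "orthonormal_L2 e" and nonpos: "{n. lam n \<le> 0} = {..<k}"
    and W: "\<forall>t x. W t x \<ge> 0" and "A \<ge> 0" "c > 0"
    and anticoercive: "\<And>b. Ifun lam e W (lincomb e {..k} b) \<le> A - c * (\<Sum>j\<le>k. (b j)\<^sup>2)"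
  shows "\<exists>\<rho>>\<rho>0. \<forall>u\<in>boundaryQ lam e \<rho>. Ifun lam e W u \<le> 0"
proof -
  define C where "C = 1 + (\<Sum>n<k. \<bar>lam n\<bar>)"
  have C: "C > 0"
    unfolding C_def by (simp add: add_pos_nonneg sum_nonneg)
  define \<rho> where "\<rho> = \<bar>\<rho>0\<bar> + 1 + C * (A / c)"
  have "0 \<le> C * (A / c)"
    using \<open>A \<ge> 0\<close> \<open>c > 0\<close> C by simp
  then have "\<rho> > \<rho>0" "1 \<le> \<rho>" "C * (A / c) \<le> \<rho>"
    unfolding \<rho>_def by linarith+
  moreover from \<open>1 \<le> \<rho>\<close> have "\<rho> \<le> \<rho>\<^sup>2"
    by (simp add: power2_eq_square)
  ultimately have \<rho>: "\<rho> > \<rho>0" "C * (A / c) \<le> \<rho>\<^sup>2"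
    by linarith+
  have "Ifun lam e W u \<le> 0" if boundary: "u \<in> boundaryQ lam e \<rho>" for u
  proof -
    obtain b where u: "u = lincomb e {..k} b"
      and "b k = 0 \<or> \<rho>\<^sup>2 \<le> C * (\<Sum>j\<le>k. (b j)\<^sup>2)"
      using boundaryQ_lincomb_atMost[OF e nonpos boundary] unfolding C_def by blast
    then consider "b k = 0" | "A / c \<le> (\<Sum>j\<le>k. (b j)\<^sup>2)"
      using \<rho>(2) C by (metis mult_le_cancel_left_pos order_trans)
    then show ?thesis
    proof cases
      case 1
      then show ?thesis
        unfolding u by (rule Ifun_lincomb_atMost_nonpos[OF e nonpos W])
    next
      case 2
      then have "A \<le> c * (\<Sum>j\<le>k. (b j)\<^sup>2)"
        using \<open>c > 0\<close> by (simp add: field_simps)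
      then show ?thesis
        unfolding u using anticoercive[of b] by linarith
    qed
  qed
  then show ?thesis
    using \<rho>(1) by blast
qed

theorem lemma2p5:
  fixes L :: "real \<Rightarrow> real^'N^'N"
    and W :: "real \<Rightarrow> real^'N \<Rightarrow> real"
    and gradW :: "real \<Rightarrow> real^'N \<Rightarrow> real^'N"
    and lam :: "nat \<Rightarrow> real"
    and e :: "nat \<Rightarrow> real \<Rightarrow> real^'N"
    and rho0 :: real
  assumes L_cont: "continuous_on UNIV L"
    and L_sym: "\<forall>t. transpose (L t) = L t"
    and L1: "cond_L1 L"
    and L2: "cond_L2 L"
    and eig: "eigen_system L lam e"
    and W_C1: "C1_with_grad W gradW"
    and W1: "(\<forall>t. W t 0 = 0) \<and> (\<exists>b1. \<forall>t x. norm (gradW t x) \<le> b1 * norm x)"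
    and W23: "\<exists>r1>0.
               (\<exists>b2>0. \<exists>\<mu>>1. \<forall>t x. norm x \<ge> r1 \<longrightarrow> Wtilde W gradW t x \<ge> b2 * norm x powr \<mu>) \<and>
               (\<exists>b3>0. \<forall>t x. norm x < r1 \<longrightarrow> Wtilde W gradW t x \<ge> - b3 * norm x)"
    and W4: "\<exists>r2>0. \<exists>\<sigma>0>0. \<forall>t x. norm x \<le> r2 \<longrightarrow>
               \<bar>W t x\<bar> \<le> (lam (nbar lam) - \<sigma>0) / 2 * (norm x)\<^sup>2"
    and W5: "\<exists>\<epsilon>0>0. \<exists>rinf>0. \<forall>t x. norm x \<ge> rinf \<longrightarrow>
               W t x \<ge> (lam (nbar lam) / 2 + \<epsilon>0) * (norm x)\<^sup>2"
    and W6: "\<forall>t x. W t x \<ge> 0"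
    and rho_pos: "rho0 > 0"
  shows "\<exists>\<rho>>rho0. \<forall>u\<in>boundaryQ lam e \<rho>. Ifun lam e W u \<le> 0"
proof -
  have e: "orthonormal_L2 e" and mono: "mono lam" and lim: "filterlim lam at_top sequentially"
    using eig unfolding eigen_system_def eigenfun_def orthonormal_L2_def by blast+
  define k where "k = nbar lam"
  have nonpos: "{n. lam n \<le> 0} = {..<k}"
    unfolding k_def using mono lim by (rule nonpos_eigenvalues_eq_lessThan_nbar)
  obtain b1 where W0: "\<forall>t. W t 0 = 0" and grad: "\<forall>t x. norm (gradW t x) \<le> b1 * norm x"
    using W1 by blast
  obtain \<epsilon> R where eps: "\<epsilon> > 0"
    and superquadratic: "\<forall>t x. norm x \<ge> R \<longrightarrow> W t x \<ge> (lam k / 2 + \<epsilon>) * (norm x)\<^sup>2"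
    using W5 unfolding k_def by blast
  obtain A where A: "A \<ge> 0"
    and anticoercive: "\<And>b. Ifun lam e W (lincomb e {..k} b) \<le> A - \<epsilon> / 2 * (\<Sum>j\<le>k. (b j)\<^sup>2)"
    using Ifun_lincomb_atMost_anticoercive[OF e nonpos W_C1 W0 grad W6 eps superquadratic] by blast
  have "\<epsilon> / 2 > 0"
    using eps by simp
  then show ?thesis
    using Ifun_nonpos_on_large_boundaryQ[OF e nonpos W6 A _ anticoercive] by blast
qed

end
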